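(* Let $q$ be a prime power, let $A(X) \in \mathbb{F}_q[X]$, and let $$A(X) = \sum_{i \geq 0} A_i(X) \Lambda^i(X), \qquad \deg(A_i) < q \text{ for all } i,$$ be the base-$\Lambda(X)$ expansion of $A(X)$, where $\Lambda(X) = X^q - X$. Then $$\mathsf{pdeg}(A) = \max_{i \geq 0} \deg(A_i).$$
   Context: For $A(X) \in \mathbb{F}_q[X]$, $A^{[\ell]}(X)$ denotes the $\ell$-th Hasse derivative: the coefficient of $Z^\ell$ in the expansion of $A(X+Z)$ as a polynomial in $Z$. The $\ell$-th pseudoderivative is $A_{\langle \ell \rangle}(X) = A^{[\ell]}(X) \bmod \Lambda(X)$ (the unique polynomial of degree at most $q-1$ agreeing with $A^{[\ell]}$ on all of $\mathbb{F}_q$). The pseudodegree is $\mathsf{pdeg}(A) = \max_{\ell \geq 0} \deg(A_{\langle \ell \rangle})$. *)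

theory Defs
  imports "HOL-Computational_Algebra.Polynomial" "HOL-Library.Cardinality"
begin

definition Lambda :: "'a::{finite,field} poly" where
  "Lambda = monom 1 (CARD('a)) - [:0, 1:]"

text \<open>Hasse derivative: the coefficient of Z^l in A(X+Z), where A(X+Z) is viewed as a
  polynomial in Z with coefficients in F[X] (outer poly variable = Z).\<close>
definition hasse :: "nat \<Rightarrow> 'a::comm_ring_1 poly \<Rightarrow> 'a poly" where
  "hasse l A = coeff (pcompose (map_poly (\<lambda>c. [:c:]) A) [:[:0, 1:], 1:]) l"

definition pseudoderiv :: "nat \<Rightarrow> 'a::{finite,field} poly \<Rightarrow> 'a poly" where
  "pseudoderiv l A = hasse l A mod Lambda"

definition pdeg :: "'a::{finite,field} poly \<Rightarrow> nat" where
  "pdeg A = Max {degree (pseudoderiv l A) | l. True}"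

end

theory Submission
  imports Defs
begin

(* Substitute X + Z into A = \<Sum> A\<^sub>i \<Lambda>\<^sup>i. Over F_q the binomial coefficients (q choose k),
   0 < k < q, vanish, so \<Lambda>(X + Z) = \<Lambda>(X) + \<Lambda>(Z) and hence
   A(X + Z) = \<Sum> A\<^sub>i(X + Z) \<Lambda>(Z)\<^sup>i modulo \<Lambda>(X). The Z\<^sup>l-coefficient of the right-hand side
   has X-degree at most d = max deg A\<^sub>i < q, so it is the l-th pseudoderivative. Its
   X\<^sup>d-coefficient is the Z\<^sup>l-coefficient of \<Sum> c\<^sub>i \<Lambda>(Z)\<^sup>i, where c\<^sub>i is the X\<^sup>d-coefficient of
   A\<^sub>i; this polynomial is nonzero by uniqueness of base-\<Lambda> expansions, so some l attains d. *)

(* taylor_shift A is A(X + Z) as a polynomial in the outer variable Z over 'a poly (in X);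
   poly_lift C is C(Z) with constant coefficients. *)

definition poly_lift :: "'a::zero poly \<Rightarrow> 'a poly poly" where
  "poly_lift p = map_poly (\<lambda>c. [:c:]) p"

definition taylor_shift :: "'a::comm_ring_1 poly \<Rightarrow> 'a poly poly" where
  "taylor_shift A = pcompose (poly_lift A) [:[:0, 1:], 1:]"

lemma hasse_conv_taylor_shift: "hasse l A = coeff (taylor_shift A) l"
  by (simp add: hasse_def taylor_shift_def poly_lift_def)

lemma coeff_poly_lift [simp]: "coeff (poly_lift p) n = [:coeff p n:]"
  by (simp add: poly_lift_def coeff_map_poly)

lemma degree_poly_lift [simp]: "degree (poly_lift p) = degree p"
  unfolding poly_lift_def by (rule degree_map_poly) simp

lemma poly_lift_0 [simp]: "poly_lift 0 = 0"
  by (simp add: poly_lift_def)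

lemma poly_lift_pCons [simp]: "poly_lift (pCons a p) = pCons [:a:] (poly_lift p)"
  by (simp add: poly_lift_def map_poly_pCons)

lemma poly_lift_add: "poly_lift (p + q) = poly_lift p + poly_lift q"
  by (rule poly_eqI) simp

lemma poly_lift_diff: "poly_lift (p - q) = poly_lift p - poly_lift (q :: 'a::comm_ring_1 poly)"
  by (rule poly_eqI) simp

lemma poly_lift_mult: "poly_lift (p * q) = poly_lift p * poly_lift (q :: 'a::comm_ring_1 poly)"
  by (rule poly_eqI) (simp add: coeff_mult sum_to_poly mult_to_poly mult.commute)

lemma poly_lift_1 [simp]: "poly_lift 1 = 1"
  by (simp add: poly_lift_def)

lemma poly_lift_power: "poly_lift (p ^ n) = poly_lift (p :: 'a::comm_ring_1 poly) ^ n"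
  by (induction n) (simp_all add: poly_lift_mult)

lemma poly_lift_sum: "poly_lift (sum f I) = (\<Sum>i\<in>I. poly_lift (f i))"
  by (induction I rule: infinite_finite_induct) (simp_all add: poly_lift_add)

lemma taylor_shift_diff: "taylor_shift (p - q) = taylor_shift p - taylor_shift q"
  by (simp add: taylor_shift_def poly_lift_diff pcompose_diff)

lemma taylor_shift_mult: "taylor_shift (p * q) = taylor_shift p * taylor_shift q"
  by (simp add: taylor_shift_def poly_lift_mult pcompose_mult)

lemma taylor_shift_1 [simp]: "taylor_shift 1 = 1"
  by (simp add: taylor_shift_def pcompose_1)

lemma taylor_shift_power: "taylor_shift (p ^ n) = taylor_shift p ^ n"
  by (induction n) (simp_all add: taylor_shift_mult)

lemma taylor_shift_sum: "taylor_shift (sum f I) = (\<Sum>i\<in>I. taylor_shift (f i))"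
  by (simp add: taylor_shift_def poly_lift_sum pcompose_sum)

lemma taylor_shift_X: "taylor_shift [:0, 1:] = [:[:0, 1:], 1:]"
  by (simp add: taylor_shift_def pcompose_pCons)

lemma coeff_hasse:
  fixes A :: "'a::comm_ring_1 poly"
  shows "coeff (hasse j A) m = of_nat ((m + j) choose j) * coeff A (m + j)"
proof -
  let ?T = "[:[:0, 1:], 1:] :: 'a poly poly"
  have "taylor_shift A = poly (poly_lift (poly_lift A)) ?T"
    by (simp add: taylor_shift_def pcompose_altdef poly_lift_def)
  also have "\<dots> = (\<Sum>k\<le>degree A. smult [:coeff A k:] (?T ^ k))"
    by (simp add: poly_altdef)
  finally have "hasse j A = (\<Sum>k\<le>degree A. smult (coeff A k) (coeff (?T ^ k) j))"
    by (simp add: hasse_conv_taylor_shift coeff_sum)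
  also have "\<dots> = (\<Sum>k\<le>degree A. if j \<le> k then smult (coeff A k * of_nat (k choose j)) (monom 1 (k - j)) else 0)"
    by (intro sum.cong refl)
      (auto simp: coeff_linear_poly_power coeff_eq_0 degree_linear_power of_nat_poly monom_altdef)
  finally have hasse_eq: "hasse j A = \<dots>" .
  have "coeff (hasse j A) m = (\<Sum>k\<le>degree A. if k = m + j then coeff A k * of_nat (k choose j) else 0)"
    unfolding hasse_eq coeff_sum by (intro sum.cong refl) auto
  also have "\<dots> = of_nat ((m + j) choose j) * coeff A (m + j)"
    by (simp add: coeff_eq_0 mult.commute)
  finally show ?thesis .
qed

lemma degree_hasse_le: "degree (hasse j A) \<le> degree A"
  by (rule degree_le) (simp add: coeff_hasse coeff_eq_0)

lemma card_field_ge_2: "2 \<le> CARD('a::{finite,field})"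
  using card_mono[of UNIV "{0, 1 :: 'a}"] by simp

lemma power_card_eq_self:
  fixes x :: "'a::{finite,field}"
  shows "x ^ CARD('a) = x"
proof (cases "x = 0")
  case False
  let ?U = "UNIV - {0 :: 'a}"
  have "bij_betw ((*) x) ?U ?U"
    using False by (intro bij_betw_byWitness[where f' = "\<lambda>y. y / x"]) auto
  then have "(\<Prod>y\<in>?U. x * y) = \<Prod>?U"
    by (rule prod.reindex_bij_betw[where g = "\<lambda>y. y"])
  then have "x ^ card ?U * \<Prod>?U = 1 * \<Prod>?U"
    by (simp add: prod.distrib)
  then have "x ^ card ?U = 1"
    by (subst (asm) mult_cancel_right) simp
  moreover have "CARD('a) = Suc (card ?U)"
    using card_field_ge_2[where 'a='a] by (simp add: card_Diff_singleton)
  ultimately show ?thesis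
    by (simp only: power_Suc mult_1_right)
qed (use card_field_ge_2[where 'a='a] in simp)

lemma of_nat_card_choose_eq_0:
  assumes "0 < k" "k < CARD('a::{finite,field})"
  shows "(of_nat (CARD('a) choose k) :: 'a) = 0"
proof -
  define q where "q = CARD('a)"
  \<comment> \<open>every element of the field is a root of P, whose degree is less than q\<close>
  define P :: "'a poly" where "P = [:1, 1:] ^ q - monom 1 q - 1"
  have coeff_P: "coeff P k = (if k \<le> q then of_nat (q choose k) else 0)
      - (if k = q then 1 else 0) - (if k = 0 then 1 else 0)" for k
    by (cases "k \<le> q") (simp_all add: P_def coeff_linear_poly_power coeff_eq_0 degree_linear_power)
  have "P = 0"
  proof (rule ccontr)
    assume "P \<noteq> 0"
    have "poly P x = 0" for x
      using power_card_eq_self[of "1 + x"] power_card_eq_self[of x]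
      by (simp add: P_def poly_monom q_def)
    then have "q \<le> degree P"
      using card_poly_roots_bound[OF \<open>P \<noteq> 0\<close>] by (simp add: q_def)
    moreover have "degree P \<le> q - 1"
      using card_field_ge_2[where 'a='a] by (intro degree_le) (auto simp: coeff_P q_def)
    ultimately show False
      using card_field_ge_2[where 'a='a] by (simp add: q_def)
  qed
  then have "coeff P k = 0"
    by simp
  then show ?thesis
    using assms by (simp add: coeff_P q_def)
qed

lemma add_power_eq_if_binomials_vanish:
  fixes a b :: "'a::comm_semiring_1"
  assumes "0 < n" "\<And>k. 0 < k \<Longrightarrow> k < n \<Longrightarrow> of_nat (n choose k) = (0 :: 'a)"
  shows "(a + b) ^ n = a ^ n + b ^ n"
proof -
  have "(a + b) ^ n = (\<Sum>k\<in>{0, n}. of_nat (n choose k) * a ^ k * b ^ (n - k))"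
    unfolding binomial_ring by (rule sum.mono_neutral_right) (auto simp: assms(2))
  then show ?thesis
    using assms(1) by (simp add: add.commute)
qed

lemma coeff_Lambda:
  "coeff (Lambda :: 'a::{finite,field} poly) k = (if k = CARD('a) then 1 else 0) - (if k = 1 then 1 else 0)"
  by (auto simp: Lambda_def coeff_pCons split: nat.split)

lemma degree_Lambda: "degree (Lambda :: 'a::{finite,field} poly) = CARD('a)"
  using card_field_ge_2[where 'a='a]
  by (intro antisym degree_le le_degree) (auto simp: coeff_Lambda)

lemma taylor_shift_Lambda: "taylor_shift (Lambda :: 'a::{finite,field} poly) = [:Lambda:] + poly_lift Lambda"
proof -
  let ?q = "CARD('a)"
  let ?X = "[:[:0, 1:]:] :: 'a poly poly" and ?Z = "[:0, 1:] :: 'a poly poly"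
  have choose_vanish: "of_nat (?q choose k) = (0 :: 'a poly poly)" if "0 < k" "k < ?q" for k
    using of_nat_card_choose_eq_0[OF that] by (simp add: of_nat_poly)
  have "taylor_shift (Lambda :: 'a poly) = (?X + ?Z) ^ ?q - (?X + ?Z)"
    by (simp add: Lambda_def taylor_shift_diff taylor_shift_power taylor_shift_X monom_altdef)
  also have "(?X + ?Z) ^ ?q = ?X ^ ?q + ?Z ^ ?q"
    using card_field_ge_2[where 'a='a] by (intro add_power_eq_if_binomials_vanish choose_vanish) auto
  also have "?X ^ ?q + ?Z ^ ?q - (?X + ?Z) = [:Lambda:] + poly_lift Lambda"
  proof -
    have "[:Lambda:] = ?X ^ ?q - ?X"
      by (simp add: Lambda_def monom_altdef poly_const_pow)
    moreover have "poly_lift Lambda = ?Z ^ ?q - ?Z"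
      by (simp add: Lambda_def monom_altdef poly_lift_diff poly_lift_power flip: one_pCons)
    ultimately show ?thesis
      by (simp only: add_diff_add)
  qed
  finally show ?thesis .
qed

lemma hasse_sum_mult_Lambda_power_cong:
  fixes Ai :: "nat \<Rightarrow> 'a::{finite,field} poly"
  shows "Lambda dvd hasse l (\<Sum>i\<in>I. Ai i * Lambda ^ i)
    - coeff (\<Sum>i\<in>I. taylor_shift (Ai i) * poly_lift (Lambda ^ i)) l"
proof -
  let ?M = "[:Lambda:] :: 'a poly poly" and ?Y = "poly_lift Lambda"
  have "?M dvd (?M + ?Y) ^ i - ?Y ^ i" for i
    by (subst power_diff_sumr2) (simp only: add_diff_cancel_right' dvd_triv_left)
  then have "?M dvd (\<Sum>i\<in>I. taylor_shift (Ai i) * ((?M + ?Y) ^ i - ?Y ^ i))"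
    by (intro dvd_sum dvd_mult)
  also have "(\<Sum>i\<in>I. taylor_shift (Ai i) * ((?M + ?Y) ^ i - ?Y ^ i)) =
      taylor_shift (\<Sum>i\<in>I. Ai i * Lambda ^ i) - (\<Sum>i\<in>I. taylor_shift (Ai i) * poly_lift (Lambda ^ i))"
    by (simp add: taylor_shift_sum taylor_shift_mult taylor_shift_power taylor_shift_Lambda
        poly_lift_power right_diff_distrib sum_subtractf)
  finally show ?thesis
    by (simp add: const_poly_dvd_iff hasse_conv_taylor_shift flip: coeff_diff)
qed

lemma coeff_taylor_shift_mult_poly_lift:
  "coeff (taylor_shift B * poly_lift C) l = (\<Sum>j\<le>l. smult (coeff C (l - j)) (hasse j B))"
  by (simp add: coeff_mult hasse_conv_taylor_shift)

lemma degree_coeff_taylor_shift_sum_le: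
  assumes "finite I" "\<And>i. i \<in> I \<Longrightarrow> degree (B i) \<le> d"
  shows "degree (coeff (\<Sum>i\<in>I. taylor_shift (B i) * poly_lift (C i)) l) \<le> d"
proof -
  have "degree (smult c (hasse j (B i))) \<le> d" if "i \<in> I" for i j c
    using degree_smult_le degree_hasse_le assms(2)[OF that] by (meson order.trans)
  then show ?thesis
    unfolding coeff_sum coeff_taylor_shift_mult_poly_lift
    using assms(1) by (intro degree_sum_le) auto
qed

lemma coeff_coeff_taylor_shift_sum:
  assumes "\<And>i. i \<in> I \<Longrightarrow> degree (B i) \<le> d"
  shows "coeff (coeff (\<Sum>i\<in>I. taylor_shift (B i) * poly_lift (C i)) l) d
    = coeff (\<Sum>i\<in>I. smult (coeff (B i) d) (C i)) l"
proof -
  have "coeff (\<Sum>j\<le>l. smult (coeff (C i) (l - j)) (hasse j (B i))) d = coeff (B i) d * coeff (C i) l"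
    if "i \<in> I" for i
  proof -
    have "coeff (B i) (d + j) = 0" if "j > 0" for j
      using assms[OF \<open>i \<in> I\<close>] that by (intro coeff_eq_0) simp
    then have "coeff (\<Sum>j\<le>l. smult (coeff (C i) (l - j)) (hasse j (B i))) d
        = (\<Sum>j\<le>l. if j = 0 then coeff (C i) l * coeff (B i) d else 0)"
      unfolding coeff_sum by (intro sum.cong refl) (auto simp: coeff_hasse)
    then show ?thesis
      by simp
  qed
  then show ?thesis
    by (simp add: coeff_sum coeff_taylor_shift_mult_poly_lift)
qed

lemma sum_smult_power_eq_0D:
  fixes P :: "'a::idom poly"
  assumes "0 < degree P" "(\<Sum>i\<le>n. smult (c i) (P ^ i)) = 0" "k \<le> n"
  shows "c k = 0"
proof -
  have "pcompose (monom a i) P = smult a (P ^ i)" for a i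
    by (induction i) (simp_all add: monom_0 monom_Suc pcompose_pCons)
  then have "pcompose (\<Sum>i\<le>n. monom (c i) i) P = 0"
    using assms(2) by (simp add: pcompose_sum)
  then have "(\<Sum>i\<le>n. monom (c i) i) = 0"
    using assms(1) by (rule pcompose_eq_0)
  then have "coeff (\<Sum>i\<le>n. monom (c i) i) k = 0"
    by simp
  then show ?thesis
    using assms(3) by (simp add: coeff_sum)
qed

lemma ex_degree_coeff_taylor_shift_sum_eq:
  fixes Ai :: "nat \<Rightarrow> 'a::idom poly"
  assumes "0 < degree P" "k \<le> n" "\<And>i. i \<le> n \<Longrightarrow> degree (Ai i) \<le> degree (Ai k)"
  shows "\<exists>l. degree (coeff (\<Sum>i\<le>n. taylor_shift (Ai i) * poly_lift (P ^ i)) l) = degree (Ai k)"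
proof -
  let ?d = "degree (Ai k)"
  let ?E = "\<lambda>l. coeff (\<Sum>i\<le>n. taylor_shift (Ai i) * poly_lift (P ^ i)) l"
  have E_le: "degree (?E l) \<le> ?d" for l
    using assms(3) by (intro degree_coeff_taylor_shift_sum_le) auto
  show ?thesis
  proof (cases "Ai k = 0")
    case True
    then show ?thesis
      using E_le[of 0] by auto
  next
    case False
    let ?T = "\<Sum>i\<le>n. smult (coeff (Ai i) ?d) (P ^ i)"
    have "?T \<noteq> 0"
      using sum_smult_power_eq_0D[OF assms(1) _ assms(2), of "\<lambda>i. coeff (Ai i) ?d"] False by auto
    have "coeff (?E l) ?d = coeff ?T l" for l
      using assms(3) by (intro coeff_coeff_taylor_shift_sum) simp
    then have "coeff (?E (degree ?T)) ?d \<noteq> 0"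
      using \<open>?T \<noteq> 0\<close> by simp
    then have "?d \<le> degree (?E (degree ?T))"
      by (rule le_degree)
    then show ?thesis
      using E_le by (intro exI antisym)
  qed
qed

lemma pseudoderiv_sum_mult_Lambda_power:
  fixes Ai :: "nat \<Rightarrow> 'a::{finite,field} poly"
  assumes "finite I" "\<And>i. i \<in> I \<Longrightarrow> degree (Ai i) < CARD('a)"
  shows "pseudoderiv l (\<Sum>i\<in>I. Ai i * Lambda ^ i)
    = coeff (\<Sum>i\<in>I. taylor_shift (Ai i) * poly_lift (Lambda ^ i)) l"
proof -
  let ?E = "coeff (\<Sum>i\<in>I. taylor_shift (Ai i) * poly_lift (Lambda ^ i)) l"
  have "degree ?E \<le> CARD('a) - 1"
    by (intro degree_coeff_taylor_shift_sum_le[OF assms(1)]) (auto dest!: assms(2))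
  then have "degree ?E < degree (Lambda :: 'a poly)"
    using card_field_ge_2[where 'a='a] by (simp add: degree_Lambda)
  then have "?E mod Lambda = ?E"
    by (rule mod_poly_less)
  moreover have "hasse l (\<Sum>i\<in>I. Ai i * Lambda ^ i) mod Lambda = ?E mod Lambda"
    by (subst mod_eq_dvd_iff) (rule hasse_sum_mult_Lambda_power_cong)
  ultimately show ?thesis
    unfolding pseudoderiv_def by simp
qed

lemma pdeg_eqI:
  assumes "\<And>l. degree (pseudoderiv l A) \<le> d" "degree (pseudoderiv l A) = d"
  shows "pdeg A = d"
proof -
  have "{degree (pseudoderiv l A) | l. True} \<subseteq> {..d}"
    using assms(1) by auto
  then have "finite {degree (pseudoderiv l A) | l. True}"
    by (rule finite_subset) simp
  then show ?thesis
    unfolding pdeg_def using assms by (intro Max_eqI) auto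
qed

theorem lemma5p3:
  fixes A :: "'a::{finite,field} poly"
    and Ai :: "nat \<Rightarrow> 'a poly"
    and n :: nat
  assumes "A = (\<Sum>i\<le>n. Ai i * Lambda ^ i)"
    and "\<forall>i\<le>n. degree (Ai i) < CARD('a)"
  shows "pdeg A = Max ((\<lambda>i. degree (Ai i)) ` {..n})"
proof -
  define d where "d = Max ((\<lambda>i. degree (Ai i)) ` {..n})"
  have "d \<in> (\<lambda>i. degree (Ai i)) ` {..n}"
    unfolding d_def by (intro Max_in) auto
  then obtain k where k: "k \<le> n" "degree (Ai k) = d"
    by auto
  have deg_le: "degree (Ai i) \<le> d" if "i \<le> n" for i
    unfolding d_def using that by (intro Max_ge) auto
  let ?E = "\<lambda>l. coeff (\<Sum>i\<le>n. taylor_shift (Ai i) * poly_lift (Lambda ^ i)) l"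
  have pseudoderiv_eq: "pseudoderiv l A = ?E l" for l
    unfolding assms(1) using assms(2) by (intro pseudoderiv_sum_mult_Lambda_power) auto
  have "0 < degree (Lambda :: 'a poly)"
    using card_field_ge_2[where 'a='a] by (simp add: degree_Lambda)
  then obtain l where "degree (?E l) = d"
    using ex_degree_coeff_taylor_shift_sum_eq[of Lambda k n Ai] k deg_le by auto
  moreover have "degree (?E l') \<le> d" for l'
    using deg_le by (intro degree_coeff_taylor_shift_sum_le) auto
  ultimately show ?thesis
    unfolding d_def[symmetric] by (intro pdeg_eqI[of A d l]) (simp_all add: pseudoderiv_eq)
qed

end
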